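(* Consider problem (P): $\min_{{\bf x}\in\mathbb{R}^n} f({\bf x})+\lambda\|(A{\bf x}+{\bf b})_+\|_0$. For ${\bf x}^*\in\mathbb{R}^n$ let $\Gamma_*:=\{i: A_i{\bf x}^*+b_i=0\}$. (i) If ${\bf x}^*$ is a local minimizer of (P) and $A_{\Gamma_*}$ has full row rank, then $$-\nabla f({\bf x}^* )\in A^\top\,\partial\|(A{\bf x}^*+{\bf b})_+\|_0 .\qquad (\ast)$$ (ii) If ${\bf x}^*$ satisfies $(\ast)$ and $f$ is convex on some neighbourhood of ${\bf x}^*$, then ${\bf x}^*$ is a local minimizer of (P).
   Context: Standing setting: $f:\mathbb{R}^n\to\mathbb{R}$ is twice continuously differentiable, $\lambda>0$, $A\in\mathbb{R}^{m\times n}$ with rows $A_1,\dots,A_m$, ${\bf b}\in\mathbb{R}^m$. For ${\bf z}\in\mathbb{R}^m$, ${\bf z}_+$ is the componentwise positive part $\max\{z_i,0\}$ and $\|{\bf z}\|_0$ the number of nonzero entries. For $\Gamma\subseteq\{1,\dots,m\}$, $A_\Gamma$ is the submatrix of rows indexed by $\Gamma$. $\partial\|{\bf y}_+\|_0$ is the limiting subdifferential of ${\bf y}\mapsto\|{\bf y}_+\|_0$ at ${\bf y}$, which equals $\{{\bf v}\in\mathbb{R}^m: v_i\ge 0 \text{ if } y_i=0,\ v_i=0 \text{ if } y_i\neq0\}$. *)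

theory Defs
  imports "HOL-Analysis.Analysis"
begin

definition gradient :: "(real^'n \<Rightarrow> real) \<Rightarrow> real^'n \<Rightarrow> real^'n" where
  "gradient f x = (THE g. (f has_derivative (\<lambda>h. g \<bullet> h)) (at x))"

definition twice_cont_diff :: "(real^'n \<Rightarrow> real) \<Rightarrow> bool" where
  "twice_cont_diff f \<longleftrightarrow> (\<forall>x. f differentiable (at x)) \<and>
     (\<exists>H :: real^'n \<Rightarrow> ((real^'n) \<Rightarrow>\<^sub>L (real^'n)).
        (\<forall>x. (gradient f has_derivative blinfun_apply (H x)) (at x)) \<and> continuous_on UNIV H)"

definition pos_part :: "real^'m \<Rightarrow> real^'m" where
  "pos_part z = (\<chi> i. max (z $ i) 0)"

definition l0norm :: "real^'m \<Rightarrow> nat" where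
  "l0norm z = card {i. z $ i \<noteq> 0}"

definition objP :: "(real^'n \<Rightarrow> real) \<Rightarrow> real \<Rightarrow> real^'n^'m \<Rightarrow> real^'m \<Rightarrow> real^'n \<Rightarrow> real" where
  "objP f lam A b x = f x + lam * real (l0norm (pos_part (A *v x + b)))"

definition local_minimizer :: "(real^'n \<Rightarrow> real) \<Rightarrow> real^'n \<Rightarrow> bool" where
  "local_minimizer F x \<longleftrightarrow> (\<exists>e>0. \<forall>y. dist y x < e \<longrightarrow> F x \<le> F y)"

text \<open>Limiting subdifferential of y \<mapsto> ||y_+||_0 at y, in the explicit form given in the paper.\<close>
definition subdiff_l0pos :: "real^'m \<Rightarrow> (real^'m) set" where
  "subdiff_l0pos y = {v. \<forall>i. (y $ i = 0 \<longrightarrow> v $ i \<ge> 0) \<and> (y $ i \<noteq> 0 \<longrightarrow> v $ i = 0)}"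

definition active_set :: "real^'n^'m \<Rightarrow> real^'m \<Rightarrow> real^'n \<Rightarrow> 'm set" where
  "active_set A b x = {i. A $ i \<bullet> x + b $ i = 0}"

definition full_row_rank :: "real^'n^'m \<Rightarrow> 'm set \<Rightarrow> bool" where
  "full_row_rank A \<Gamma> \<longleftrightarrow> inj_on (\<lambda>i. A $ i) \<Gamma> \<and> independent ((\<lambda>i. A $ i) ` \<Gamma>)"

end

theory Submission
  imports Defs
begin

(* Part (i): at a local minimizer no direction w with A_i w <= 0 on the active set decreases f
   to first order, because moving along w creates no new positive component of A x + b. Hence
   grad f(xs) lies in the dual of this polyhedral cone; since the active rows are linearly
   independent, Farkas' lemma reduces to dual vectors, and -grad f(xs) is a nonnegative
   combination of the active rows.
   Part (ii): near xs the inactive components keep their signs. If an active component becomes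
   positive, the penalty jumps by lam, which outweighs the small change of f; otherwise the
   tangent inequality of the convex f and the sign pattern of the multiplier give f z >= f xs. *)

lemma has_derivative_gradient:
  assumes "f differentiable (at x)"
  shows "(f has_derivative (\<lambda>h. gradient f x \<bullet> h)) (at x)"
  unfolding gradient_def
proof (rule theI')
  obtain F where F: "(f has_derivative F) (at x)"
    using assms differentiable_def by blast
  then have "F = (\<lambda>h. adjoint F 1 \<bullet> h)"
    using adjoint_works[of F _ 1] has_derivative_linear by (fastforce simp: inner_commute)
  then show "\<exists>!g. (f has_derivative (\<lambda>h. g \<bullet> h)) (at x)"
    using F has_derivative_unique[OF F] by (metis vector_eq_rdot)
qed

lemma transpose_matrix_vector_inner:
  fixes A :: "real^'n^'m"
  shows "(transpose A *v v) \<bullet> h = v \<bullet> (A *v h)"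
  by (simp add: dot_lmul_matrix vector_transpose_matrix)

lemma transpose_matrix_vector_rows:
  fixes A :: "real^'n^'m"
  shows "transpose A *v v = (\<Sum>i\<in>UNIV. v $ i *\<^sub>R A $ i)"
  by (simp add: vec_eq_iff matrix_vector_mult_def transpose_def mult.commute)

lemma l0norm_pos_part: "l0norm (pos_part z) = card {i. 0 < z $ i}"
  unfolding l0norm_def pos_part_def by (rule arg_cong[where f = card]) (auto simp: max_def)

lemma has_real_derivative_along_line:
  assumes "(f has_derivative F) (at x)"
  shows "((\<lambda>t. f (x + t *\<^sub>R w)) has_real_derivative F w) (at 0)"
proof -
  have "((f \<circ> (\<lambda>t. x + t *\<^sub>R w)) has_derivative F \<circ> (\<lambda>t. t *\<^sub>R w)) (at 0)"
    using assms by (intro diff_chain_at) (auto intro!: derivative_eq_intros)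
  moreover have "F \<circ> (\<lambda>t. t *\<^sub>R w) = (\<lambda>t. t * F w)"
    using assms by (auto simp: fun_eq_iff linear_scale has_derivative_linear)
  ultimately show ?thesis
    by (simp add: has_field_derivative_def o_def mult_commute_abs)
qed

lemma convex_on_ball_above_tangent:
  fixes f :: "'a::real_normed_vector \<Rightarrow> real"
  assumes der: "(f has_derivative F) (at x)"
    and cvx: "convex_on (ball x d) f" and z: "z \<in> ball x d"
  shows "f x + F (z - x) \<le> f z"
proof -
  define w where "w = z - x"
  have "((\<lambda>t. (f (x + t *\<^sub>R w) - f x) / t) \<longlongrightarrow> F w) (at 0)"
    using has_real_derivative_along_line[OF der, of w] by (simp add: has_field_derivative_iff)
  then have lim: "((\<lambda>t. (f (x + t *\<^sub>R w) - f x) / t) \<longlongrightarrow> F w) (at_right 0)"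
    by (rule filterlim_mono) (simp_all add: at_le)
  have x: "x \<in> ball x d"
    using z by (metis centre_in_ball ball_eq_empty empty_iff not_less)
  have "eventually (\<lambda>t. (f (x + t *\<^sub>R w) - f x) / t \<le> f z - f x) (at_right 0)"
    using eventually_at_right_real[OF zero_less_one]
  proof eventually_elim
    case (elim t)
    then have "f ((1 - t) *\<^sub>R x + t *\<^sub>R z) \<le> (1 - t) * f x + t * f z"
      using convex_onD[OF cvx, of t x z] x z by simp
    moreover have "(1 - t) *\<^sub>R x + t *\<^sub>R z = x + t *\<^sub>R w"
      by (simp add: w_def algebra_simps)
    ultimately have "f (x + t *\<^sub>R w) - f x \<le> t * (f z - f x)"
      by (simp add: algebra_simps)
    then show ?case
      using elim by (simp add: divide_le_eq mult.commute)
  qed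
  then have "F w \<le> f z - f x"
    using lim by (intro tendsto_upperbound) auto
  then show ?thesis by (simp add: w_def)
qed

lemma eventually_strict_signs_preserved:
  fixes y :: "'a \<Rightarrow> real^'m"
  assumes "(y \<longlongrightarrow> c) F"
  shows "eventually (\<lambda>t. \<forall>i. (0 < c $ i \<longrightarrow> 0 < y t $ i) \<and> (c $ i < 0 \<longrightarrow> y t $ i < 0)) F"
proof (intro eventually_all_finite allI)
  fix i
  have "((\<lambda>t. y t $ i) \<longlongrightarrow> c $ i) F"
    using assms by (rule tendsto_vec_nth)
  then show "eventually (\<lambda>t. (0 < c $ i \<longrightarrow> 0 < y t $ i) \<and> (c $ i < 0 \<longrightarrow> y t $ i < 0)) F"
    by (cases "0 < c $ i"; cases "c $ i < 0")
       (auto dest: order_tendstoD elim: eventually_mono)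
qed

lemma subdiff_l0pos_inner_nonpos:
  assumes "v \<in> subdiff_l0pos y" and "\<And>i. y $ i = 0 \<Longrightarrow> y' $ i \<le> 0"
  shows "v \<bullet> (y' - y) \<le> 0"
  unfolding inner_vec_def
proof (rule sum_nonpos)
  fix i
  show "v $ i \<bullet> (y' - y) $ i \<le> 0"
    using assms by (cases "y $ i = 0") (auto simp: subdiff_l0pos_def mult_nonneg_nonpos)
qed

lemma in_span_if_annihilates_orthogonal_complement:
  fixes g :: "'a::euclidean_space"
  assumes "\<And>w. (\<And>r. r \<in> R \<Longrightarrow> r \<bullet> w = 0) \<Longrightarrow> g \<bullet> w = 0"
  shows "g \<in> span R"
proof -
  obtain p z where p: "p \<in> span R" and z: "\<And>u. u \<in> span R \<Longrightarrow> orthogonal z u"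
    and g: "g = p + z"
    by (rule orthogonal_subspace_decomp_exists[of R g]) blast
  have "g \<bullet> z = 0"
    using assms z span_base by (metis orthogonal_def inner_commute)
  moreover have "p \<bullet> z = 0"
    using z[OF p] by (simp add: orthogonal_def inner_commute)
  ultimately have "z = 0"
    by (simp add: g inner_add_left)
  then show ?thesis using g p by simp
qed

lemma independent_dual_vector:
  fixes r :: "'a::euclidean_space"
  assumes "independent R" and "r \<in> R"
  obtains z where "0 < r \<bullet> z" and "\<And>r'. r' \<in> R - {r} \<Longrightarrow> r' \<bullet> z = 0"
proof -
  obtain p z where p: "p \<in> span (R - {r})" and z: "\<And>u. u \<in> span (R - {r}) \<Longrightarrow> orthogonal z u"
    and r: "r = p + z"
    by (rule orthogonal_subspace_decomp_exists[of "R - {r}" r]) blast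
  have "r \<notin> span (R - {r})"
    using assms dependent_def by blast
  then have "0 < z \<bullet> z" using r p by auto
  moreover have "r \<bullet> z = z \<bullet> z"
    using z[OF p] by (simp add: r inner_add_left orthogonal_def inner_commute[of p])
  moreover have "r' \<bullet> z = 0" if "r' \<in> R - {r}" for r'
    using z[OF span_base[OF that]] by (simp add: orthogonal_def inner_commute)
  ultimately show ?thesis using that[of z] by simp
qed

lemma farkas_independent:
  fixes g :: "'a::euclidean_space"
  assumes ind: "independent R" and cone: "\<And>w. (\<And>r. r \<in> R \<Longrightarrow> r \<bullet> w \<le> 0) \<Longrightarrow> 0 \<le> g \<bullet> w"
  obtains c where "\<And>r. r \<in> R \<Longrightarrow> 0 \<le> c r" and "g = - (\<Sum>r\<in>R. c r *\<^sub>R r)"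
proof -
  have fin: "finite R"
    using ind by (rule finiteI_independent)
  have "g \<in> span R"
  proof (rule in_span_if_annihilates_orthogonal_complement)
    fix w assume "\<And>r. r \<in> R \<Longrightarrow> r \<bullet> w = 0"
    then show "g \<bullet> w = 0"
      using cone[of w] cone[of "- w"] by fastforce
  qed
  then obtain c where g: "g = (\<Sum>r\<in>R. c r *\<^sub>R r)"
    using span_finite[OF fin] by blast
  have "c r \<le> 0" if r: "r \<in> R" for r
  proof -
    obtain z where rz: "0 < r \<bullet> z" and z: "\<And>r'. r' \<in> R - {r} \<Longrightarrow> r' \<bullet> z = 0"
      using independent_dual_vector[OF ind r] by blast
    have "g \<bullet> z = (\<Sum>r'\<in>R. c r' * (r' \<bullet> z))"
      by (simp add: g inner_sum_left)
    also have "\<dots> = c r * (r \<bullet> z)"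
      using z by (intro sum.remove[OF fin r, THEN trans]) (simp add: sum.neutral)
    finally have "g \<bullet> z = c r * (r \<bullet> z)" .
    moreover have "0 \<le> g \<bullet> - z"
    proof (rule cone)
      fix r' assume "r' \<in> R"
      then show "r' \<bullet> - z \<le> 0" using rz z by (cases "r' = r") auto
    qed
    ultimately show ?thesis using rz by (simp add: mult_le_0_iff)
  qed
  then show ?thesis
    using that[of "\<lambda>r. - c r"] by (simp add: g sum_negf)
qed

lemma objP_eq_card_positive:
  "objP f lam A b x = f x + lam * real (card {i. 0 < (A *v x + b) $ i})"
  by (simp add: objP_def l0norm_pos_part)

lemma positive_components_along_feasible_direction:
  fixes A :: "real^'n^'m"
  assumes t: "0 \<le> t" and w: "\<And>i. i \<in> active_set A b x \<Longrightarrow> A $ i \<bullet> w \<le> 0"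
    and signs: "\<And>i. (A *v x + b) $ i < 0 \<Longrightarrow> (A *v (x + t *\<^sub>R w) + b) $ i < 0"
  shows "{i. 0 < (A *v (x + t *\<^sub>R w) + b) $ i} \<subseteq> {i. 0 < (A *v x + b) $ i}"
proof
  fix i assume pos: "i \<in> {i. 0 < (A *v (x + t *\<^sub>R w) + b) $ i}"
  have comp: "(A *v (x + t *\<^sub>R w) + b) $ i = (A *v x + b) $ i + t * (A $ i \<bullet> w)"
    by (simp add: matrix_vector_mul_component inner_add_right)
  consider "(A *v x + b) $ i < 0" | "(A *v x + b) $ i = 0" | "0 < (A *v x + b) $ i"
    by linarith
  then show "i \<in> {i. 0 < (A *v x + b) $ i}"
  proof cases
    case 2
    then have "A $ i \<bullet> w \<le> 0"
      using w by (simp add: active_set_def matrix_vector_mul_component)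
    then have "t * (A $ i \<bullet> w) \<le> 0"
      using t by (simp add: mult_nonneg_nonpos)
    then show ?thesis
      using pos[unfolded mem_Collect_eq comp] 2 by linarith
  qed (use pos signs[of i] in auto)
qed

lemma local_minimizer_descent_cone:
  fixes f :: "real^'n \<Rightarrow> real" and A :: "real^'n^'m"
  assumes der: "(f has_derivative F) (at x)" and lm: "local_minimizer (objP f lam A b) x"
    and lam: "0 \<le> lam" and w: "\<And>i. i \<in> active_set A b x \<Longrightarrow> A $ i \<bullet> w \<le> 0"
  shows "0 \<le> F w"
proof (rule ccontr)
  assume "\<not> 0 \<le> F w"
  with DERIV_neg_dec_right[OF has_real_derivative_along_line[OF der, of w]]
  obtain d where d: "0 < d" "\<And>t. 0 < t \<Longrightarrow> t < d \<Longrightarrow> f (x + t *\<^sub>R w) < f x"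
    by auto
  obtain e where e: "0 < e" "\<And>y. dist y x < e \<Longrightarrow> objP f lam A b x \<le> objP f lam A b y"
    using lm unfolding local_minimizer_def by blast
  define Y where "Y = (\<lambda>y. A *v y + b)"
  have ray: "((\<lambda>t. x + t *\<^sub>R w) \<longlongrightarrow> x) (at_right 0)"
    by (auto intro!: tendsto_eq_intros)
  then have Yray: "((\<lambda>t. Y (x + t *\<^sub>R w)) \<longlongrightarrow> Y x) (at_right 0)"
    unfolding Y_def
    by (intro tendsto_add isCont_tendsto_compose[OF matrix_vector_mult_linear_continuous_at] tendsto_const)
  have "eventually (\<lambda>t. (\<forall>i. Y x $ i < 0 \<longrightarrow> Y (x + t *\<^sub>R w) $ i < 0)
      \<and> dist (x + t *\<^sub>R w) x < e \<and> 0 < t \<and> t < d) (at_right 0)"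
    using eventually_strict_signs_preserved[OF Yray] tendstoD[OF ray e(1)] eventually_at_right_real[OF d(1)]
    by eventually_elim auto
  then obtain t where signs: "\<And>i. Y x $ i < 0 \<Longrightarrow> Y (x + t *\<^sub>R w) $ i < 0"
    and near: "dist (x + t *\<^sub>R w) x < e" and t: "0 < t" "t < d"
    using eventually_happens' trivial_limit_at_right_real by blast
  define y where "y = x + t *\<^sub>R w"
  have "{i. 0 < Y y $ i} \<subseteq> {i. 0 < Y x $ i}"
    unfolding Y_def y_def using t(1) w signs[unfolded Y_def]
    by (intro positive_components_along_feasible_direction) auto
  then have "lam * card {i. 0 < Y y $ i} \<le> lam * card {i. 0 < Y x $ i}"
    using lam by (intro mult_left_mono) (auto intro: card_mono)
  moreover have "f y < f x"
    using d(2) t by (simp add: y_def)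
  ultimately have "objP f lam A b y < objP f lam A b x"
    by (simp add: objP_eq_card_positive Y_def)
  with e(2) near show False by (fastforce simp: y_def)
qed

lemma local_minimizer_imp_stationary:
  fixes f :: "real^'n \<Rightarrow> real" and A :: "real^'n^'m"
  assumes der: "(f has_derivative (\<lambda>h. g \<bullet> h)) (at x)"
    and lm: "local_minimizer (objP f lam A b) x" and lam: "0 \<le> lam"
    and rank: "full_row_rank A (active_set A b x)"
  shows "- g \<in> (\<lambda>v. transpose A *v v) ` subdiff_l0pos (A *v x + b)"
proof -
  define \<Gamma> where "\<Gamma> = active_set A b x"
  define R where "R = (\<lambda>i. A $ i) ` \<Gamma>"
  have inj: "inj_on (\<lambda>i. A $ i) \<Gamma>" and ind: "independent R"
    using rank by (simp_all add: full_row_rank_def R_def \<Gamma>_def)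
  have cone: "0 \<le> g \<bullet> w" if "\<And>r. r \<in> R \<Longrightarrow> r \<bullet> w \<le> 0" for w
    using local_minimizer_descent_cone[OF der lm lam, of w] that by (simp add: R_def \<Gamma>_def)
  obtain c where c: "\<And>r. r \<in> R \<Longrightarrow> 0 \<le> c r" and g: "g = - (\<Sum>r\<in>R. c r *\<^sub>R r)"
    using farkas_independent[OF ind cone] by blast
  define u where "u = (\<chi> i. if i \<in> \<Gamma> then c (A $ i) else 0)"
  have "transpose A *v u = (\<Sum>i\<in>UNIV. u $ i *\<^sub>R A $ i)"
    by (rule transpose_matrix_vector_rows)
  also have "\<dots> = (\<Sum>i\<in>\<Gamma>. c (A $ i) *\<^sub>R A $ i)"
    by (rule sum.mono_neutral_cong_right) (auto simp: u_def)
  also have "\<dots> = - g"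
    by (simp add: g R_def sum.reindex[OF inj])
  finally have "- g = transpose A *v u" ..
  moreover have "u \<in> subdiff_l0pos (A *v x + b)"
    using c by (auto simp: subdiff_l0pos_def u_def \<Gamma>_def R_def active_set_def
        matrix_vector_mul_component)
  ultimately show ?thesis by blast
qed

lemma objP_le_near_stationary:
  fixes f :: "real^'n \<Rightarrow> real" and A :: "real^'n^'m"
  assumes der: "(f has_derivative (\<lambda>h. g \<bullet> h)) (at x)" and lam: "0 \<le> lam"
    and v: "v \<in> subdiff_l0pos (A *v x + b)" and g: "- g = transpose A *v v"
    and cvx: "convex_on (ball x d) f" and z: "z \<in> ball x d" and fz: "f x - lam < f z"
    and signs: "\<And>i. (0 < (A *v x + b) $ i \<longrightarrow> 0 < (A *v z + b) $ i)
                    \<and> ((A *v x + b) $ i < 0 \<longrightarrow> (A *v z + b) $ i < 0)"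
  shows "objP f lam A b x \<le> objP f lam A b z"
proof -
  define Y where "Y = (\<lambda>z. A *v z + b)"
  have sub: "{i. 0 < Y x $ i} \<subseteq> {i. 0 < Y z $ i}"
    using signs by (auto simp: Y_def)
  show ?thesis
  proof (cases "\<exists>i. Y x $ i = 0 \<and> 0 < Y z $ i")
    case True
    then have "{i. 0 < Y x $ i} \<subset> {i. 0 < Y z $ i}"
      using sub by force
    then have "card {i. 0 < Y x $ i} + 1 \<le> card {i. 0 < Y z $ i}"
      by (metis Suc_eq_plus1 Suc_leI finite psubset_card_mono)
    then have "lam * (card {i. 0 < Y x $ i} + 1) \<le> lam * card {i. 0 < Y z $ i}"
      using lam by (intro mult_left_mono) auto
    then show ?thesis
      using fz by (simp add: objP_eq_card_positive Y_def algebra_simps)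
  next
    case False
    have "v \<bullet> (Y z - Y x) \<le> 0"
      by (rule subdiff_l0pos_inner_nonpos) (use v False in \<open>auto simp: Y_def\<close>)
    moreover have "v \<bullet> (Y z - Y x) = - (g \<bullet> (z - x))"
      using arg_cong[OF g, of "\<lambda>u. u \<bullet> (z - x)"] transpose_matrix_vector_inner[of A v "z - x"]
      by (simp add: Y_def matrix_vector_mult_diff_distrib)
    moreover have "f x + g \<bullet> (z - x) \<le> f z"
      using convex_on_ball_above_tangent[OF der cvx z] .
    moreover have "lam * card {i. 0 < Y x $ i} \<le> lam * card {i. 0 < Y z $ i}"
      using lam sub by (intro mult_left_mono) (auto intro: card_mono)
    ultimately show ?thesis
      by (simp add: objP_eq_card_positive Y_def)
  qed
qed

lemma stationary_imp_local_minimizer: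
  fixes f :: "real^'n \<Rightarrow> real" and A :: "real^'n^'m"
  assumes der: "(f has_derivative (\<lambda>h. g \<bullet> h)) (at x)" and lam: "0 < lam"
    and v: "v \<in> subdiff_l0pos (A *v x + b)" and g: "- g = transpose A *v v"
    and cvx: "convex_on (ball x d) f" and d: "0 < d"
  shows "local_minimizer (objP f lam A b) x"
proof -
  define Y where "Y = (\<lambda>z. A *v z + b)"
  have "isCont f x"
    using der by (rule has_derivative_continuous)
  then have E1: "eventually (\<lambda>z. f x - lam < f z) (nhds x)"
    using lam by (intro order_tendstoD(1)) (auto simp: isCont_def tendsto_at_iff_tendsto_nhds)
  have "isCont Y x"
    unfolding Y_def by (intro continuous_intros)
  then have "(Y \<longlongrightarrow> Y x) (nhds x)"
    by (simp add: isCont_def tendsto_at_iff_tendsto_nhds)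
  note E2 = eventually_strict_signs_preserved[OF this]
  have E3: "eventually (\<lambda>z. z \<in> ball x d) (nhds x)"
    using d by (intro eventually_nhds_in_open) auto
  obtain e where e: "0 < e" and near: "\<And>z. dist z x < e \<Longrightarrow> f x - lam < f z
      \<and> (\<forall>i. (0 < Y x $ i \<longrightarrow> 0 < Y z $ i) \<and> (Y x $ i < 0 \<longrightarrow> Y z $ i < 0)) \<and> z \<in> ball x d"
    using eventually_conj[OF E1 eventually_conj[OF E2 E3]] unfolding eventually_nhds_metric by blast
  have "objP f lam A b x \<le> objP f lam A b z" if "dist z x < e" for z
    using near[OF that] lam
    by (intro objP_le_near_stationary[OF der _ v g cvx]) (auto simp: Y_def)
  then show ?thesis
    unfolding local_minimizer_def using e by blast
qed

theorem lemma3p1: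
  fixes f :: "real^'n \<Rightarrow> real" and lam :: real
    and A :: "real^'n^'m" and b :: "real^'m" and xs :: "real^'n"
  assumes "twice_cont_diff f" and "lam > 0"
  shows "(local_minimizer (objP f lam A b) xs \<and> full_row_rank A (active_set A b xs)
            \<longrightarrow> - gradient f xs \<in> (\<lambda>v. transpose A *v v) ` subdiff_l0pos (A *v xs + b))
       \<and> (- gradient f xs \<in> (\<lambda>v. transpose A *v v) ` subdiff_l0pos (A *v xs + b)
            \<and> (\<exists>d>0. convex_on (ball xs d) f)
            \<longrightarrow> local_minimizer (objP f lam A b) xs)"
proof -
  have "f differentiable (at xs)"
    using assms(1) by (simp add: twice_cont_diff_def)
  then have der: "(f has_derivative (\<lambda>h. gradient f xs \<bullet> h)) (at xs)"
    by (rule has_derivative_gradient)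
  show ?thesis
  proof (intro conjI impI)
    assume "local_minimizer (objP f lam A b) xs \<and> full_row_rank A (active_set A b xs)"
    then show "- gradient f xs \<in> (\<lambda>v. transpose A *v v) ` subdiff_l0pos (A *v xs + b)"
      using local_minimizer_imp_stationary[OF der] assms(2) by (meson less_imp_le)
  next
    assume "- gradient f xs \<in> (\<lambda>v. transpose A *v v) ` subdiff_l0pos (A *v xs + b)
        \<and> (\<exists>d>0. convex_on (ball xs d) f)"
    then show "local_minimizer (objP f lam A b) xs"
      using stationary_imp_local_minimizer[OF der assms(2)] by blast
  qed
qed

end
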